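(* Every product-union congestion game has a monotone equilibrium selection (MES): for each demand vector $\mu$ there is an equilibrium load vector $x(\mu)$ such that every map $\mu\mapsto x_r(\mu)$ is nondecreasing with respect to each component of $\mu$.
   Context: A congestion game structure $\mathcal G=(\mathcal R,c,\mathcal S)$: finite resource set $\mathcal R$ with continuous nondecreasing costs $c_r:\mathbb R_+\to\mathbb R_+$, finite commodity set $\mathcal H$, each $h$ with a nonempty finite family $\mathcal S^h\subseteq2^{\mathcal R}$ of strategies. For demand $\mu\in\mathbb R_+^{\mathcal H}$, a feasible flow is $f=(f^h_s)$, $f^h_s\ge0$, $\sum_{s\in\mathcal S^h}f^h_s=\mu^h$; loads $x_r=\sum_h\sum_{s\in\mathcal S^h:r\in s}f^h_s$; strategy cost $c_s=\sum_{r\in s}c_r(x_r)$. A Wardrop equilibrium is a feasible flow with, for each $h$, some $\lambda^h$ such that $c_s=\lambda^h$ whenever $f^h_s>0$ and $c_s\ge\lambda^h$ for all $s\in\mathcal S^h$; equilibrium load vectors are load vectors of Wardrop equilibria. A singleton congestion game is one in which every strategy is a single resource. For two structures $\mathcal G_1=(\mathcal R_1,c_1,\mathcal S_1)$, $\mathcal G_2=(\mathcal R_2,c_2,\mathcal S_2)$ with disjoint resource sets and commodity sets $\mathcal H_1,\mathcal H_2$: the product $\mathcal G_1\otimes\mathcal G_2$ has resources $\mathcal R_1\cup\mathcal R_2$ with the original costs and commodities $i\otimes j$ for $(i,j)\in\mathcal H_1\times\mathcal H_2$ with strategy sets $\mathcal S^{i\otimes j}=\{s_1\cup s_2:(s_1,s_2)\in\mathcal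 S_1^i\times\mathcal S_2^j\}$; the union $\mathcal G_1\cup\mathcal G_2$ has resources $\mathcal R_1\cup\mathcal R_2$ with original costs and commodities $\mathcal H_1\sqcup\mathcal H_2$ with their original strategy sets. A product-union game is one obtained from singleton congestion games by finitely many product or union operations. *)

theory Defs
  imports "HOL-Analysis.Analysis"
begin

text \<open>A congestion game structure is represented by its resource set R :: 'r set,
a cost function c :: 'r => real => real (only its values on R matter), and a list S
of strategy families: commodity h (for h < length S) has strategy family S ! h,
a set of subsets of R.\<close>

type_synonym 'r strat_fam = "'r set set list"

definition admissible_costs :: "'r set \<Rightarrow> ('r \<Rightarrow> real \<Rightarrow> real) \<Rightarrow> bool" where
  "admissible_costs R c \<longleftrightarrow>
     (\<forall>r\<in>R. continuous_on {0..} (c r) \<and> mono_on {0..} (c r) \<and> (\<forall>t\<ge>0. c r t \<ge> 0))"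

definition prod_fams :: "'r strat_fam \<Rightarrow> 'r strat_fam \<Rightarrow> 'r strat_fam" where
  "prod_fams S1 S2 = concat (map (\<lambda>A. map (\<lambda>B. {s1 \<union> s2 | s1 s2. s1 \<in> A \<and> s2 \<in> B}) S2) S1)"

text \<open>Product-union games (resource set and strategy families); the costs are the
original costs on each resource, so a single global cost function is used.\<close>
inductive product_union :: "'r set \<Rightarrow> 'r strat_fam \<Rightarrow> bool" where
  singleton: "\<lbrakk> finite R; \<forall>F\<in>set S. F \<noteq> {} \<and> F \<subseteq> (\<lambda>r. {r}) ` R \<rbrakk>
              \<Longrightarrow> product_union R S"
| product: "\<lbrakk> product_union R1 S1; product_union R2 S2; R1 \<inter> R2 = {} \<rbrakk>
              \<Longrightarrow> product_union (R1 \<union> R2) (prod_fams S1 S2)"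
| union: "\<lbrakk> product_union R1 S1; product_union R2 S2; R1 \<inter> R2 = {} \<rbrakk>
              \<Longrightarrow> product_union (R1 \<union> R2) (S1 @ S2)"

definition feasible_flow :: "'r strat_fam \<Rightarrow> (nat \<Rightarrow> real) \<Rightarrow> (nat \<Rightarrow> 'r set \<Rightarrow> real) \<Rightarrow> bool" where
  "feasible_flow S \<mu> f \<longleftrightarrow>
     (\<forall>h<length S. (\<forall>s\<in>S ! h. f h s \<ge> 0) \<and> (\<Sum>s\<in>S ! h. f h s) = \<mu> h)"

definition load :: "'r strat_fam \<Rightarrow> (nat \<Rightarrow> 'r set \<Rightarrow> real) \<Rightarrow> 'r \<Rightarrow> real" where
  "load S f r = (\<Sum>h<length S. \<Sum>s\<in>{s \<in> S ! h. r \<in> s}. f h s)"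

definition strat_cost :: "('r \<Rightarrow> real \<Rightarrow> real) \<Rightarrow> 'r strat_fam \<Rightarrow> (nat \<Rightarrow> 'r set \<Rightarrow> real) \<Rightarrow> 'r set \<Rightarrow> real" where
  "strat_cost c S f s = (\<Sum>r\<in>s. c r (load S f r))"

definition wardrop_eq :: "('r \<Rightarrow> real \<Rightarrow> real) \<Rightarrow> 'r strat_fam \<Rightarrow> (nat \<Rightarrow> real) \<Rightarrow> (nat \<Rightarrow> 'r set \<Rightarrow> real) \<Rightarrow> bool" where
  "wardrop_eq c S \<mu> f \<longleftrightarrow> feasible_flow S \<mu> f \<and>
     (\<forall>h<length S. \<exists>lam. \<forall>s\<in>S ! h.
        (f h s > 0 \<longrightarrow> strat_cost c S f s = lam) \<and> strat_cost c S f s \<ge> lam)"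

definition eq_load_vector :: "'r set \<Rightarrow> ('r \<Rightarrow> real \<Rightarrow> real) \<Rightarrow> 'r strat_fam \<Rightarrow> (nat \<Rightarrow> real) \<Rightarrow> ('r \<Rightarrow> real) \<Rightarrow> bool" where
  "eq_load_vector R c S \<mu> x \<longleftrightarrow> (\<exists>f. wardrop_eq c S \<mu> f \<and> (\<forall>r\<in>R. x r = load S f r))"

definition demand :: "'r strat_fam \<Rightarrow> (nat \<Rightarrow> real) \<Rightarrow> bool" where
  "demand S \<mu> \<longleftrightarrow> (\<forall>h<length S. \<mu> h \<ge> 0)"

definition has_MES :: "'r set \<Rightarrow> ('r \<Rightarrow> real \<Rightarrow> real) \<Rightarrow> 'r strat_fam \<Rightarrow> bool" where
  "has_MES R c S \<longleftrightarrow> (\<exists>X :: (nat \<Rightarrow> real) \<Rightarrow> 'r \<Rightarrow> real.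
     (\<forall>\<mu>. demand S \<mu> \<longrightarrow> eq_load_vector R c S \<mu> (X \<mu>)) \<and>
     (\<forall>\<mu> h t r. demand S \<mu> \<and> h < length S \<and> \<mu> h \<le> t \<and> r \<in> R
         \<longrightarrow> X \<mu> r \<le> X (\<mu>(h := t)) r))"

end

theory Submission
  imports Defs
begin

text \<open>
  For a singleton game the equilibria are the minimisers of Beckmann's potential, and for strictly
  increasing costs the equilibrium loads are monotone in the demand.  General costs \<open>c\<close> are
  approximated by \<open>c r t + t / (n + 1)\<close>; by compactness of a product of intervals the
  corresponding selections have a common limit point for all demand vectors simultaneously,
  which is again an equilibrium selection and monotone.

  A union game decomposes into its two parts.  In a product game, commodity \<open>i \<otimes> j\<close> is routed
  by the independent coupling of equilibria of the factors for the row and column marginals of the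
  demand; strategy costs add up, so this is an equilibrium, and raising one demand raises exactly
  one row and one column marginal.
\<close>

section \<open>Common limits of bounded families\<close>

lemma inf_filtercomap_neq_bot:
  assumes "inf G (filtermap w F) \<noteq> bot"
  shows "inf (filtercomap w G) F \<noteq> bot"
proof
  assume "inf (filtercomap w G) F = bot"
  then obtain P Q where P: "eventually P G" and Q: "eventually Q F" and PQ: "\<And>n. P (w n) \<Longrightarrow> \<not> Q n"
    unfolding trivial_limit_def eventually_inf eventually_filtercomap by metis
  have "eventually (\<lambda>y. \<not> P y) (filtermap w F)"
    unfolding eventually_filtermap using Q by (rule eventually_mono) (use PQ in blast)
  with P have "eventually (\<lambda>_. False) (inf G (filtermap w F))"
    unfolding eventually_inf by (intro exI[of _ P] exI[of _ "\<lambda>y. \<not> P y"]) simp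
  with assms show False
    by (simp add: trivial_limit_def)
qed

lemma tendsto_fun_apply:
  fixes w :: "'a \<Rightarrow> 'i \<Rightarrow> 'b::topological_space"
  assumes "(w \<longlongrightarrow> x) F"
  shows "((\<lambda>n. w n i) \<longlongrightarrow> x i) F"
proof (rule topological_tendstoI)
  fix U assume "open U" "x i \<in> U"
  have "open ((\<lambda>y. y i) -` U)"
    using continuous_on_open_vimage[OF open_UNIV, of "\<lambda>y::'i \<Rightarrow> 'b. y i"] \<open>open U\<close> by simp
  from topological_tendstoD[OF assms this] \<open>x i \<in> U\<close> show "eventually (\<lambda>n. w n i \<in> U) F"
    by simp
qed

text \<open>By Tychonoff the family \<open>z n\<close> has a cluster point \<open>x\<close> in the product topology; the indices
  \<open>n\<close> with \<open>z n\<close> near \<open>x\<close> generate a proper filter along which \<open>z\<close> converges to \<open>x\<close>.  Unlike a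
  convergent subsequence, this works for uncountably many coordinates at once.\<close>
lemma bounded_family_has_limits_along_subfilter:
  fixes z :: "nat \<Rightarrow> 'i \<Rightarrow> real"
  assumes bound: "\<And>n i. i \<in> I \<Longrightarrow> \<bar>z n i\<bar> \<le> B i"
  shows "\<exists>F x. F \<noteq> bot \<and> F \<le> sequentially \<and> (\<forall>i\<in>I. ((\<lambda>n. z n i) \<longlongrightarrow> x i) F)"
proof -
  define w where "w n i = (if i \<in> I then z n i else 0)" for n i
  define K where "K = PiE UNIV (\<lambda>i. cball (0::real) \<bar>B i\<bar>)"
  have "compactin (product_topology (\<lambda>i. euclidean) UNIV) K"
    unfolding K_def compactin_PiE by (simp add: compact_cball)
  then have "compact K"
    by (simp add: euclidean_product_topology)
  moreover have "\<bar>w n i\<bar> \<le> \<bar>B i\<bar>" for n i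
    using bound[of i n] by (auto simp: w_def)
  then have "eventually (\<lambda>y. y \<in> K) (filtermap w sequentially)"
    by (simp add: K_def PiE_iff mem_cball_0 eventually_filtermap)
  ultimately obtain x where "inf (nhds x) (filtermap w sequentially) \<noteq> bot"
    unfolding compact_filter by (metis filtermap_bot_iff sequentially_bot)
  define F where "F = inf (filtercomap w (nhds x)) sequentially"
  have "F \<noteq> bot"
    unfolding F_def by (rule inf_filtercomap_neq_bot) fact
  moreover have "F \<le> sequentially"
    by (simp add: F_def)
  moreover have "(w \<longlongrightarrow> x) F"
    unfolding filterlim_def F_def
    by (metis filtermap_filtercomap filtermap_mono inf_le1 order_trans)
  then have "((\<lambda>n. z n i) \<longlongrightarrow> x i) F" if "i \<in> I" for i
    using tendsto_fun_apply[of w x F i] that by (simp add: w_def)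
  ultimately show ?thesis
    by blast
qed

section \<open>Flows, loads and Beckmann's potential\<close>

lemma load_add: "load S (\<lambda>h s. f h s + g h s) r = load S f r + load S g r"
  unfolding load_def by (simp add: sum.distrib)

lemma load_diff: "load S (\<lambda>h s. f h s - g h s) r = load S f r - load S g r"
  unfolding load_def by (simp add: sum_subtractf)

lemma tendsto_load:
  assumes "\<forall>h<length S. \<forall>s\<in>S ! h. ((\<lambda>n. F n h s) \<longlongrightarrow> f h s) G"
  shows "((\<lambda>n. load S (F n) r) \<longlongrightarrow> load S f r) G"
  unfolding load_def using assms by (intro tendsto_sum) auto

lemma strat_cost_cong:
  assumes "\<And>r. r \<in> s \<Longrightarrow> load S f r = load S' f' r"
  shows "strat_cost c S f s = strat_cost c S' f' s"
  unfolding strat_cost_def using assms by simp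

lemma wardrop_eqD:
  assumes "wardrop_eq c S \<mu> f" "h < length S" "s \<in> S ! h" "f h s > 0" "s' \<in> S ! h"
  shows "strat_cost c S f s \<le> strat_cost c S f s'"
  using assms unfolding wardrop_eq_def by metis

lemma eq_load_vector_cong:
  assumes "\<And>h. h < length S \<Longrightarrow> \<mu> h = \<mu>' h"
  shows "eq_load_vector R c S \<mu> x \<longleftrightarrow> eq_load_vector R c S \<mu>' x"
  using assms by (simp add: eq_load_vector_def wardrop_eq_def feasible_flow_def)

definition shift_flow ::
    "(nat \<Rightarrow> 'r set \<Rightarrow> real) \<Rightarrow> nat \<Rightarrow> 'r set \<Rightarrow> 'r set \<Rightarrow> real \<Rightarrow> nat \<Rightarrow> 'r set \<Rightarrow> real" where
  "shift_flow f h s s' d =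
     (\<lambda>h' t. f h' t - (if h' = h \<and> t = s then d else 0) + (if h' = h \<and> t = s' then d else 0))"

lemma integral_increment_bounds:
  fixes g :: "real \<Rightarrow> real"
  assumes cont: "continuous_on {0..} g" and mono: "mono_on {0..} g" and ab: "0 \<le> a" "a \<le> b"
  shows "(b - a) * g a \<le> integral {0..b} g - integral {0..a} g"
    and "integral {0..b} g - integral {0..a} g \<le> (b - a) * g b"
proof -
  have int: "g integrable_on {x..y}" if "0 \<le> x" for x y
    using cont that by (intro integrable_continuous_interval) (auto elim: continuous_on_subset)
  have "integral {0..a} g + integral {a..b} g = integral {0..b} g"
    using ab int[of 0 b] by (intro Henstock_Kurzweil_Integration.integral_combine) auto
  then have eq: "integral {0..b} g - integral {0..a} g = integral {a..b} g"
    by simp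
  have "integral {a..b} (\<lambda>_. g a) \<le> integral {a..b} g"
    using ab int[of a b] by (intro integral_le) (auto intro: mono_onD[OF mono])
  with ab show "(b - a) * g a \<le> integral {0..b} g - integral {0..a} g"
    by (simp add: eq)
  have "integral {a..b} g \<le> integral {a..b} (\<lambda>_. g b)"
    using ab int[of a b] by (intro integral_le) (auto intro: mono_onD[OF mono])
  with ab show "integral {0..b} g - integral {0..a} g \<le> (b - a) * g b"
    by (simp add: eq)
qed

text \<open>Beckmann's potential, whose minimisers over the feasible flows are equilibria.\<close>
definition beckmann ::
    "('r \<Rightarrow> real \<Rightarrow> real) \<Rightarrow> 'r set \<Rightarrow> 'r strat_fam \<Rightarrow> (nat \<Rightarrow> 'r set \<Rightarrow> real) \<Rightarrow> real" where
  "beckmann c R S f = (\<Sum>r\<in>R. integral {0..load S f r} (c r))"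

lemma admissible_costs_perturbed:
  assumes "admissible_costs R c" "0 \<le> e"
  shows "admissible_costs R (\<lambda>r t. c r t + e * t)"
  unfolding admissible_costs_def
proof (intro ballI conjI allI impI)
  fix r assume r: "r \<in> R"
  with assms show "continuous_on {0..} (\<lambda>t. c r t + e * t)"
    by (intro continuous_intros) (simp add: admissible_costs_def)
  from assms r show "mono_on {0..} (\<lambda>t. c r t + e * t)"
    by (intro mono_onI add_mono mult_left_mono) (auto simp: admissible_costs_def mono_onD)
  fix t :: real assume "0 \<le> t"
  with assms r show "0 \<le> c r t + e * t"
    by (simp add: admissible_costs_def)
qed

locale congestion_game =
  fixes R :: "'r set" and S :: "'r strat_fam"
  assumes finite_resources: "finite R"
    and family_nonempty: "h < length S \<Longrightarrow> S ! h \<noteq> {}"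
    and strategy_subset: "h < length S \<Longrightarrow> s \<in> S ! h \<Longrightarrow> s \<subseteq> R"
begin

lemma finite_family: "h < length S \<Longrightarrow> finite (S ! h)"
  using strategy_subset finite_resources by (meson Pow_iff finite_Pow_iff rev_finite_subset subsetI)

lemma finite_strategy: "h < length S \<Longrightarrow> s \<in> S ! h \<Longrightarrow> finite s"
  using strategy_subset finite_resources by (meson finite_subset)

lemma load_eq_sum_if:
  "load S f r = (\<Sum>h<length S. \<Sum>s\<in>S ! h. if r \<in> s then f h s else 0)"
  unfolding load_def by (rule sum.cong[OF refl]) (simp add: sum.inter_filter finite_family)

lemma load_outside:
  assumes "r \<notin> R"
  shows "load S f r = 0"
proof -
  have empty: "{s \<in> S ! h. r \<in> s} = {}" if "h < length S" for h
    using strategy_subset[OF that] assms by blast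
  show ?thesis
    unfolding load_def by (intro sum.neutral ballI) (simp add: empty)
qed

lemma load_nonneg: "feasible_flow S \<mu> f \<Longrightarrow> 0 \<le> load S f r"
  unfolding load_def feasible_flow_def by (intro sum_nonneg) auto

lemma load_le_total_demand:
  assumes "feasible_flow S \<mu> f"
  shows "load S f r \<le> (\<Sum>h<length S. \<mu> h)"
  unfolding load_def
proof (rule sum_mono)
  fix h assume "h \<in> {..<length S}"
  with assms have "(\<Sum>s\<in>{s \<in> S ! h. r \<in> s}. f h s) \<le> (\<Sum>s\<in>S ! h. f h s)"
    by (intro sum_mono2 finite_family) (auto simp: feasible_flow_def)
  with assms \<open>h \<in> {..<length S}\<close> show "(\<Sum>s\<in>{s \<in> S ! h. r \<in> s}. f h s) \<le> \<mu> h"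
    by (simp add: feasible_flow_def)
qed

lemma flow_le_demand:
  assumes "feasible_flow S \<mu> f" "h < length S" "s \<in> S ! h"
  shows "f h s \<le> \<mu> h"
proof -
  have "f h s \<le> (\<Sum>s\<in>S ! h. f h s)"
    using assms by (intro member_le_sum finite_family) (auto simp: feasible_flow_def)
  with assms show ?thesis
    by (simp add: feasible_flow_def)
qed

lemma commodity_load_bounds:
  assumes "feasible_flow S \<mu> f" "h < length S"
  shows "0 \<le> (\<Sum>s\<in>S ! h. if r \<in> s then f h s else 0)"
    and "(\<Sum>s\<in>S ! h. if r \<in> s then f h s else 0) \<le> \<mu> h"
proof -
  have nonneg: "\<forall>s\<in>S ! h. 0 \<le> f h s" and total: "(\<Sum>s\<in>S ! h. f h s) = \<mu> h"
    using assms by (simp_all add: feasible_flow_def)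
  then show "0 \<le> (\<Sum>s\<in>S ! h. if r \<in> s then f h s else 0)"
    by (intro sum_nonneg) auto
  have "(\<Sum>s\<in>S ! h. if r \<in> s then f h s else 0) \<le> (\<Sum>s\<in>S ! h. f h s)"
    using nonneg by (intro sum_mono) auto
  with total show "(\<Sum>s\<in>S ! h. if r \<in> s then f h s else 0) \<le> \<mu> h"
    by simp
qed

lemma flow_le_load:
  assumes ff: "feasible_flow S \<mu> f" and "h < length S" "s \<in> S ! h" "r \<in> s"
  shows "f h s \<le> load S f r"
proof -
  have nonneg: "0 \<le> f h' s'" if "h' < length S" "s' \<in> S ! h'" for h' s'
    using ff that by (simp add: feasible_flow_def)
  have "f h s \<le> (\<Sum>s\<in>{s \<in> S ! h. r \<in> s}. f h s)"
    using assms nonneg by (intro member_le_sum) (auto simp: finite_family)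
  also have "\<dots> \<le> load S f r"
    unfolding load_def using assms nonneg
    by (intro member_le_sum[where f = "\<lambda>h. \<Sum>s\<in>{s \<in> S ! h. r \<in> s}. f h s"] sum_nonneg) auto
  finally show ?thesis .
qed

lemma feasible_flow_exists:
  assumes "demand S \<mu>"
  shows "\<exists>f. feasible_flow S \<mu> f"
proof -
  define s0 where "s0 h = (SOME s. s \<in> S ! h)" for h
  have "s0 h \<in> S ! h" if "h < length S" for h
    unfolding s0_def using family_nonempty[OF that] by (simp add: some_in_eq)
  then have "feasible_flow S \<mu> (\<lambda>h s. if s = s0 h then \<mu> h else 0)"
    using assms by (simp add: feasible_flow_def demand_def finite_family sum.delta')
  then show ?thesis
    by blast
qed

lemma load_point_mass:
  assumes "h < length S" "s \<in> S ! h"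
  shows "load S (\<lambda>h' t. if h' = h \<and> t = s then d else 0) r = (if r \<in> s then d else 0)"
proof -
  have inner: "(\<Sum>t\<in>S ! h'. if r \<in> t then if h' = h \<and> t = s then d else 0 else 0)
      = (if h' = h then if r \<in> s then d else 0 else 0)" if "h' < length S" for h'
  proof -
    have "(\<Sum>t\<in>S ! h'. if r \<in> t then if h' = h \<and> t = s then d else 0 else 0)
        = (\<Sum>t\<in>S ! h'. if t = s then if h' = h \<and> r \<in> s then d else 0 else 0)"
      by (intro sum.cong) auto
    then show ?thesis
      using assms by (simp add: sum.delta finite_family[OF that])
  qed
  show ?thesis
    using assms(1) by (simp add: load_eq_sum_if inner)
qed

lemma load_shift_flow:
  assumes "h < length S" "s \<in> S ! h" "s' \<in> S ! h"
  shows "load S (shift_flow f h s s' d) r = load S f r - (if r \<in> s then d else 0) + (if r \<in> s' then d else 0)"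
  unfolding shift_flow_def using assms by (simp add: load_add load_diff load_point_mass)

lemma feasible_shift_flow:
  assumes ff: "feasible_flow S \<mu> f" and "h < length S" "s \<in> S ! h" "s' \<in> S ! h" "s \<noteq> s'"
    and "0 \<le> d" "d \<le> f h s"
  shows "feasible_flow S \<mu> (shift_flow f h s s' d)"
  unfolding feasible_flow_def
proof (intro allI impI conjI ballI)
  fix h' t assume "h' < length S" "t \<in> S ! h'"
  with assms show "0 \<le> shift_flow f h s s' d h' t"
    by (auto simp: shift_flow_def feasible_flow_def)
next
  fix h' assume h': "h' < length S"
  have point: "(\<Sum>t\<in>S ! h'. if h' = h \<and> t = u then d else 0) = (if h' = h then d else 0)"
    if "u \<in> S ! h" for u
    using that finite_family[OF h'] by (cases "h' = h") (simp_all add: sum.delta)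
  show "(\<Sum>t\<in>S ! h'. shift_flow f h s s' d h' t) = \<mu> h'"
    using ff h' assms(3,4)
    by (simp add: shift_flow_def sum.distrib sum_subtractf point feasible_flow_def)
qed

lemma wardrop_eqI:
  assumes ff: "feasible_flow S \<mu> f"
    and min: "\<And>h s s'. h < length S \<Longrightarrow> s \<in> S ! h \<Longrightarrow> f h s > 0 \<Longrightarrow> s' \<in> S ! h
               \<Longrightarrow> strat_cost c S f s \<le> strat_cost c S f s'"
  shows "wardrop_eq c S \<mu> f"
  unfolding wardrop_eq_def
proof (intro conjI ff allI impI)
  fix h assume h: "h < length S"
  let ?C = "strat_cost c S f ` (S ! h)"
  have fin: "finite ?C" and ne: "?C \<noteq> {}"
    using finite_family[OF h] family_nonempty[OF h] by simp_all
  show "\<exists>lam. \<forall>s\<in>S ! h. (f h s > 0 \<longrightarrow> strat_cost c S f s = lam) \<and> strat_cost c S f s \<ge> lam"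
  proof (intro exI ballI conjI impI)
    fix s assume s: "s \<in> S ! h"
    then show "Min ?C \<le> strat_cost c S f s"
      using fin by simp
    assume "f h s > 0"
    then have "strat_cost c S f s \<le> Min ?C"
      using min[OF h s] fin ne by (auto simp: Min_ge_iff)
    with \<open>Min ?C \<le> strat_cost c S f s\<close> show "strat_cost c S f s = Min ?C"
      by simp
  qed
qed

lemma feasible_flows_have_common_limits:
  assumes ff: "\<And>n \<mu>. \<mu> \<in> A \<Longrightarrow> feasible_flow S \<mu> (F n \<mu>)"
  shows "\<exists>G f. G \<noteq> bot \<and> G \<le> sequentially \<and>
           (\<forall>\<mu>\<in>A. \<forall>h<length S. \<forall>s\<in>S ! h. ((\<lambda>n. F n \<mu> h s) \<longlongrightarrow> f \<mu> h s) G)"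
proof -
  define I where "I = {(\<mu>, h, s). \<mu> \<in> A \<and> h < length S \<and> s \<in> S ! h}"
  define z where "z n i = F n (fst i) (fst (snd i)) (snd (snd i))" for n i
  have bound: "\<bar>z n i\<bar> \<le> fst i (fst (snd i))" if "i \<in> I" for n i
  proof -
    obtain \<mu> h s where i: "i = (\<mu>, h, s)" and "\<mu> \<in> A" "h < length S" "s \<in> S ! h"
      using \<open>i \<in> I\<close> by (auto simp: I_def)
    with ff[of \<mu> n] flow_le_demand[of \<mu> "F n \<mu>" h s] show ?thesis
      by (simp add: z_def feasible_flow_def)
  qed
  have "\<exists>G x. G \<noteq> bot \<and> G \<le> sequentially \<and> (\<forall>i\<in>I. ((\<lambda>n. z n i) \<longlongrightarrow> x i) G)"
    by (rule bounded_family_has_limits_along_subfilter) (rule bound)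
  then obtain G x where "G \<noteq> bot" "G \<le> sequentially" and lim: "\<forall>i\<in>I. ((\<lambda>n. z n i) \<longlongrightarrow> x i) G"
    by blast
  have "((\<lambda>n. F n \<mu> h s) \<longlongrightarrow> x (\<mu>, h, s)) G" if "\<mu> \<in> A" "h < length S" "s \<in> S ! h" for \<mu> h s
    using lim that by (auto simp: I_def z_def)
  with \<open>G \<noteq> bot\<close> \<open>G \<le> sequentially\<close> show ?thesis
    by (intro exI[of _ G] exI[of _ "\<lambda>\<mu> h s. x (\<mu>, h, s)"]) simp
qed

lemma feasible_flow_limit:
  assumes "G \<noteq> bot" and ff: "eventually (\<lambda>n. feasible_flow S \<mu> (F n)) G"
    and lim: "\<forall>h<length S. \<forall>s\<in>S ! h. ((\<lambda>n. F n h s) \<longlongrightarrow> f h s) G"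
  shows "feasible_flow S \<mu> f"
  unfolding feasible_flow_def
proof (intro allI impI conjI ballI)
  fix h s assume h: "h < length S" and s: "s \<in> S ! h"
  have "eventually (\<lambda>n. 0 \<le> F n h s) G"
    using ff by (rule eventually_mono) (simp add: feasible_flow_def h s)
  with lim h s \<open>G \<noteq> bot\<close> show "0 \<le> f h s"
    by (intro tendsto_lowerbound) auto
next
  fix h assume h: "h < length S"
  have "eventually (\<lambda>n. (\<Sum>s\<in>S ! h. F n h s) = \<mu> h) G"
    using ff by (rule eventually_mono) (simp add: feasible_flow_def h)
  moreover have "((\<lambda>n. \<Sum>s\<in>S ! h. F n h s) \<longlongrightarrow> (\<Sum>s\<in>S ! h. f h s)) G"
    using lim h by (intro tendsto_sum) auto
  ultimately have "((\<lambda>n. \<mu> h) \<longlongrightarrow> (\<Sum>s\<in>S ! h. f h s)) G"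
    by (simp add: tendsto_cong)
  then show "(\<Sum>s\<in>S ! h. f h s) = \<mu> h"
    using tendsto_unique[OF \<open>G \<noteq> bot\<close> _ tendsto_const] by blast
qed

lemma wardrop_eq_limit:
  assumes adm: "admissible_costs R c" and "G \<noteq> bot" and e: "(e \<longlongrightarrow> 0) G"
    and eq: "\<And>n. wardrop_eq (\<lambda>r t. c r t + e n * t) S \<mu> (F n)"
    and lim: "\<forall>h<length S. \<forall>s\<in>S ! h. ((\<lambda>n. F n h s) \<longlongrightarrow> f h s) G"
  shows "wardrop_eq c S \<mu> f"
proof (rule wardrop_eqI)
  have ffn: "feasible_flow S \<mu> (F n)" for n
    using eq[of n] by (simp add: wardrop_eq_def)
  show ff: "feasible_flow S \<mu> f"
    using feasible_flow_limit[OF \<open>G \<noteq> bot\<close> _ lim] ffn by simp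
  have cost_lim: "((\<lambda>n. strat_cost (\<lambda>r t. c r t + e n * t) S (F n) s) \<longlongrightarrow> strat_cost c S f s) G"
    if "h < length S" "s \<in> S ! h" for h s
    unfolding strat_cost_def
  proof (rule tendsto_sum)
    fix r assume "r \<in> s"
    with that strategy_subset have "r \<in> R" by blast
    then have "continuous_on {0..} (c r)"
      using adm by (simp add: admissible_costs_def)
    then have "((\<lambda>n. c r (load S (F n) r)) \<longlongrightarrow> c r (load S f r)) G"
      by (rule continuous_on_tendsto_compose[OF _ tendsto_load[OF lim]])
         (simp_all add: load_nonneg[OF ff] load_nonneg[OF ffn])
    moreover have "((\<lambda>n. e n * load S (F n) r) \<longlongrightarrow> 0 * load S f r) G"
      by (intro tendsto_mult e tendsto_load lim)
    ultimately show "((\<lambda>n. c r (load S (F n) r) + e n * load S (F n) r) \<longlongrightarrow> c r (load S f r)) G"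
      using tendsto_add by force
  qed
  fix h s s' assume h: "h < length S" and s: "s \<in> S ! h" and pos: "f h s > 0" and s': "s' \<in> S ! h"
  have "eventually (\<lambda>n. F n h s > 0) G"
    using order_tendstoD(1)[OF lim[rule_format, OF h s] pos] .
  then have "eventually (\<lambda>n. strat_cost (\<lambda>r t. c r t + e n * t) S (F n) s
                            \<le> strat_cost (\<lambda>r t. c r t + e n * t) S (F n) s') G"
    by (rule eventually_mono) (rule wardrop_eqD[OF eq h s _ s'])
  then show "strat_cost c S f s \<le> strat_cost c S f s'"
    by (rule tendsto_le[OF \<open>G \<noteq> bot\<close> cost_lim[OF h s'] cost_lim[OF h s]])
qed

lemma beckmann_nonneg:
  assumes "admissible_costs R c" "feasible_flow S \<mu> f"
  shows "0 \<le> beckmann c R S f"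
  unfolding beckmann_def
proof (intro sum_nonneg)
  fix r assume "r \<in> R"
  have load: "0 \<le> load S f r"
    using assms(2) by (rule load_nonneg)
  with assms \<open>r \<in> R\<close> have "0 \<le> (load S f r - 0) * c r 0"
    by (simp add: admissible_costs_def)
  also have "(load S f r - 0) * c r 0 \<le> integral {0..load S f r} (c r) - integral {0..0} (c r)"
    using assms \<open>r \<in> R\<close> load
    by (intro integral_increment_bounds) (simp_all add: admissible_costs_def)
  finally show "0 \<le> integral {0..load S f r} (c r)"
    by simp
qed

lemma tendsto_beckmann:
  assumes adm: "admissible_costs R c" and ff: "\<And>n. feasible_flow S \<mu> (F n)" "feasible_flow S \<mu> f"
    and lim: "\<forall>h<length S. \<forall>s\<in>S ! h. ((\<lambda>n. F n h s) \<longlongrightarrow> f h s) G"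
  shows "((\<lambda>n. beckmann c R S (F n)) \<longlongrightarrow> beckmann c R S f) G"
  unfolding beckmann_def
proof (intro tendsto_sum)
  fix r assume "r \<in> R"
  define B where "B = (\<Sum>h<length S. \<mu> h)"
  have "continuous_on {0..B} (\<lambda>t. integral {0..t} (c r))"
    using adm \<open>r \<in> R\<close>
    by (intro indefinite_integral_continuous_1 integrable_continuous_interval)
       (auto simp: admissible_costs_def intro: continuous_on_subset[of "{0..}"])
  moreover have bounded: "load S g r \<in> {0..B}" if "feasible_flow S \<mu> g" for g
    using that load_nonneg load_le_total_demand by (simp add: B_def)
  ultimately show "((\<lambda>n. integral {0..load S (F n) r} (c r)) \<longlongrightarrow> integral {0..load S f r} (c r)) G"
    by (rule continuous_on_tendsto_compose[OF _ tendsto_load[OF lim]])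
       (simp_all add: bounded ff del: atLeastAtMost_iff)
qed

lemma beckmann_minimizer_exists:
  assumes adm: "admissible_costs R c" and dem: "demand S \<mu>"
  shows "\<exists>f. feasible_flow S \<mu> f \<and> (\<forall>f'. feasible_flow S \<mu> f' \<longrightarrow> beckmann c R S f \<le> beckmann c R S f')"
proof -
  let ?V = "beckmann c R S ` {f. feasible_flow S \<mu> f}"
  define m where "m = Inf ?V"
  have ne: "?V \<noteq> {}"
    using feasible_flow_exists[OF dem] by blast
  have bdd: "bdd_below ?V"
    using beckmann_nonneg[OF adm] by (intro bdd_belowI[of _ 0]) blast
  have "\<exists>f. feasible_flow S \<mu> f \<and> beckmann c R S f < m + inverse (real (Suc n))" for n
    using cInf_lessD[OF ne, of "m + inverse (real (Suc n))"] by (auto simp: m_def)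
  then obtain F where ff: "\<And>n. feasible_flow S \<mu> (F n)"
    and small: "\<And>n. beckmann c R S (F n) < m + inverse (real (Suc n))"
    by metis
  obtain G f where G: "G \<noteq> bot" "G \<le> sequentially"
    and lim: "\<forall>h<length S. \<forall>s\<in>S ! h. ((\<lambda>n. F n h s) \<longlongrightarrow> f h s) G"
    using feasible_flows_have_common_limits[of "{\<mu>}" "\<lambda>n _. F n"] ff by auto
  have ffl: "feasible_flow S \<mu> f"
    using feasible_flow_limit[OF G(1) _ lim] ff by simp
  have "((\<lambda>n. m + inverse (real (Suc n))) \<longlongrightarrow> m) G"
    using tendsto_mono[OF G(2) tendsto_add[OF tendsto_const LIMSEQ_inverse_real_of_nat]] by simp
  moreover have "eventually (\<lambda>n. beckmann c R S (F n) \<le> m + inverse (real (Suc n))) G"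
    using small by (simp add: less_imp_le)
  ultimately have "beckmann c R S f \<le> m"
    using tendsto_le[OF G(1) _ tendsto_beckmann[OF adm ff ffl lim]] by blast
  moreover have "m \<le> beckmann c R S f'" if "feasible_flow S \<mu> f'" for f'
    unfolding m_def using that bdd by (intro cInf_lower) auto
  ultimately show ?thesis
    using ffl by force
qed

lemma beckmann_shift_singleton:
  assumes adm: "admissible_costs R c" and ff: "feasible_flow S \<mu> f" and h: "h < length S"
    and r: "{r} \<in> S ! h" and r': "{r'} \<in> S ! h" and "r \<noteq> r'"
    and \<delta>: "0 \<le> \<delta>" "\<delta> \<le> f h {r}"
  shows "beckmann c R S (shift_flow f h {r} {r'} \<delta>) - beckmann c R S f
           \<le> \<delta> * (c r' (load S f r' + \<delta>) - c r (load S f r - \<delta>))"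
proof -
  let ?f' = "shift_flow f h {r} {r'} \<delta>"
  let ?I = "\<lambda>q t. integral {0..t} (c q)"
  define x where "x = load S f r"
  define x' where "x' = load S f r'"
  have R: "r \<in> R" "r' \<in> R"
    using strategy_subset[OF h r] strategy_subset[OF h r'] by auto
  have bounds: "(b - a) * c q a \<le> ?I q b - ?I q a" "?I q b - ?I q a \<le> (b - a) * c q b"
    if "q \<in> R" "0 \<le> a" "a \<le> b" for q a b
    using adm that by (intro integral_increment_bounds; simp add: admissible_costs_def)+
  have x: "\<delta> \<le> x" "0 \<le> x'"
    using \<delta> flow_le_load[OF ff h r] load_nonneg[OF ff] by (auto simp: x_def x'_def)
  have "beckmann c R S ?f' - beckmann c R S f = (\<Sum>q\<in>R. ?I q (load S ?f' q) - ?I q (load S f q))"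
    unfolding beckmann_def by (simp add: sum_subtractf)
  also have "\<dots> = (\<Sum>q\<in>{r, r'}. ?I q (load S ?f' q) - ?I q (load S f q))"
    using R finite_resources by (intro sum.mono_neutral_right) (auto simp: load_shift_flow[OF h r r'])
  also have "\<dots> = (?I r (x - \<delta>) - ?I r x) + (?I r' (x' + \<delta>) - ?I r' x')"
    using \<open>r \<noteq> r'\<close> by (simp add: load_shift_flow[OF h r r'] x_def x'_def)
  also have "\<dots> \<le> - (\<delta> * c r (x - \<delta>)) + \<delta> * c r' (x' + \<delta>)"
    using bounds(1)[of r "x - \<delta>" x] bounds(2)[of r' x' "x' + \<delta>"] R x \<delta> by simp
  finally show ?thesis
    by (simp add: x_def x'_def algebra_simps)
qed

lemma beckmann_decreasing_shift:
  assumes adm: "admissible_costs R c" and ff: "feasible_flow S \<mu> f" and h: "h < length S"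
    and r: "{r} \<in> S ! h" and r': "{r'} \<in> S ! h" and pos: "f h {r} > 0"
    and less: "c r' (load S f r') < c r (load S f r)"
  shows "\<exists>f'. feasible_flow S \<mu> f' \<and> beckmann c R S f' < beckmann c R S f"
proof -
  define x where "x = load S f r"
  define x' where "x' = load S f r'"
  have "r \<noteq> r'"
    using less by auto
  have R: "r \<in> R" "r' \<in> R"
    using strategy_subset[OF h r] strategy_subset[OF h r'] by auto
  have cont: "continuous_on {0..} (c q)" if "q \<in> R" for q
    using adm that by (simp add: admissible_costs_def)
  have "f h {r} \<le> x"
    using flow_le_load[OF ff h r] by (simp add: x_def)
  have small: "eventually (\<lambda>\<delta>. 0 < \<delta> \<and> \<delta> \<le> f h {r}) (at_right 0)"
    using pos by (intro eventually_at_rightI[of 0 "f h {r}"]) auto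
  have "((\<lambda>\<delta>. c r' (x' + \<delta>) - c r (x - \<delta>)) \<longlongrightarrow> c r' (x' + 0) - c r (x - 0)) (at_right 0)"
  proof (intro tendsto_diff continuous_on_tendsto_compose[OF cont] tendsto_intros R)
    show "eventually (\<lambda>\<delta>. x' + \<delta> \<in> {0..}) (at_right 0)"
      using eventually_at_right_less[of "0::real"]
      by (rule eventually_mono) (use load_nonneg[OF ff] in \<open>simp add: x'_def\<close>)
    show "eventually (\<lambda>\<delta>. x - \<delta> \<in> {0..}) (at_right 0)"
      using small by (rule eventually_mono) (use \<open>f h {r} \<le> x\<close> in simp)
  qed (use \<open>f h {r} \<le> x\<close> pos load_nonneg[OF ff] in \<open>auto simp: x'_def\<close>)
  then have "eventually (\<lambda>\<delta>. c r' (x' + \<delta>) - c r (x - \<delta>) < 0) (at_right 0)"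
    using less by (intro order_tendstoD) (auto simp: x_def x'_def)
  with small obtain \<delta> where \<delta>: "0 < \<delta>" "\<delta> \<le> f h {r}" "c r' (x' + \<delta>) - c r (x - \<delta>) < 0"
    using eventually_happens'[OF trivial_limit_at_right_real] eventually_conj by blast
  have "beckmann c R S (shift_flow f h {r} {r'} \<delta>) - beckmann c R S f < 0"
    using beckmann_shift_singleton[OF adm ff h r r' \<open>r \<noteq> r'\<close>, of \<delta>] \<delta> mult_pos_neg[OF \<delta>(1) \<delta>(3)]
    by (simp add: x_def x'_def)
  moreover have "feasible_flow S \<mu> (shift_flow f h {r} {r'} \<delta>)"
    using \<delta> \<open>r \<noteq> r'\<close> by (intro feasible_shift_flow[OF ff h r r']) auto
  ultimately show ?thesis
    by force
qed

end

section \<open>Singleton games\<close>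

locale singleton_game = congestion_game +
  assumes singleton_strategies: "h < length S \<Longrightarrow> s \<in> S ! h \<Longrightarrow> \<exists>r. s = {r}"
begin

lemma beckmann_minimizer_is_wardrop_eq:
  assumes adm: "admissible_costs R c" and ff: "feasible_flow S \<mu> f"
    and min: "\<And>f'. feasible_flow S \<mu> f' \<Longrightarrow> beckmann c R S f \<le> beckmann c R S f'"
  shows "wardrop_eq c S \<mu> f"
proof (rule wardrop_eqI[OF ff])
  fix h s s' assume h: "h < length S" and s: "s \<in> S ! h" and pos: "f h s > 0" and s': "s' \<in> S ! h"
  obtain r r' where rr': "s = {r}" "s' = {r'}"
    using singleton_strategies[OF h s] singleton_strategies[OF h s'] by blast
  show "strat_cost c S f s \<le> strat_cost c S f s'"
  proof (rule ccontr)
    assume "\<not> ?thesis"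
    then have "c r' (load S f r') < c r (load S f r)"
      by (simp add: rr' strat_cost_def)
    with beckmann_decreasing_shift[OF adm ff h] s s' pos rr' min show False
      by (metis not_less)
  qed
qed

lemma wardrop_eq_exists:
  assumes "admissible_costs R c" "demand S \<mu>"
  shows "\<exists>f. wardrop_eq c S \<mu> f"
  using beckmann_minimizer_exists[OF assms] beckmann_minimizer_is_wardrop_eq[OF assms(1)] by blast

lemma sum_load_eq_sum_flows_inside:
  assumes "D \<subseteq> R"
  shows "(\<Sum>r\<in>D. load S f r) = (\<Sum>h<length S. \<Sum>s\<in>{s \<in> S ! h. s \<subseteq> D}. f h s)"
proof -
  have finD: "finite D"
    using assms finite_resources by (rule finite_subset)
  have inner: "(\<Sum>r\<in>D. if r \<in> s then f h s else 0) = (if s \<subseteq> D then f h s else 0)"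
    if hs: "h < length S" "s \<in> S ! h" for h s
  proof -
    obtain q where "s = {q}"
      using singleton_strategies[OF hs] by blast
    then show ?thesis
      using finD by (simp add: sum.delta')
  qed
  have "(\<Sum>r\<in>D. load S f r) = (\<Sum>h<length S. \<Sum>s\<in>S ! h. \<Sum>r\<in>D. if r \<in> s then f h s else 0)"
    unfolding load_eq_sum_if by (subst sum.swap) (simp add: sum.swap[of _ D])
  also have "\<dots> = (\<Sum>h<length S. \<Sum>s\<in>S ! h. if s \<subseteq> D then f h s else 0)"
    by (intro sum.cong refl) (simp add: inner)
  also have "\<dots> = (\<Sum>h<length S. \<Sum>s\<in>{s \<in> S ! h. s \<subseteq> D}. f h s)"
    by (rule sum.cong[OF refl]) (simp add: sum.inter_filter finite_family)
  finally show ?thesis .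
qed

lemma wardrop_eq_no_escape:
  assumes strict: "\<And>r a b. r \<in> R \<Longrightarrow> 0 \<le> a \<Longrightarrow> a < b \<Longrightarrow> c r a < c r b"
    and eq: "wardrop_eq c S \<mu> f" and eq': "wardrop_eq c S \<mu>' f'" and k: "k < length S"
    and p: "{p} \<in> S ! k" "f k {p} > 0" "load S f' p < load S f p"
    and q: "{q} \<in> S ! k" "load S f q \<le> load S f' q"
  shows "f' k {q} = 0"
proof -
  have ff: "feasible_flow S \<mu> f" and ff': "feasible_flow S \<mu>' f'"
    using eq eq' by (simp_all add: wardrop_eq_def)
  have R: "p \<in> R" "q \<in> R"
    using strategy_subset[OF k p(1)] strategy_subset[OF k q(1)] by auto
  have cost: "strat_cost c S g {r} = c r (load S g r)" for g r
    by (simp add: strat_cost_def)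
  have "c p (load S f' p) < c p (load S f p)"
    using strict R p(3) load_nonneg[OF ff'] by blast
  moreover have "c q (load S f q) \<le> c q (load S f' q)"
    using strict[OF R(2) load_nonneg[OF ff, of q], of "load S f' q"] q(2)
    by (cases "load S f q = load S f' q") auto
  moreover have "c p (load S f p) \<le> c q (load S f q)"
    using wardrop_eqD[OF eq k p(1,2) q(1)] by (simp add: cost)
  moreover have "c q (load S f' q) \<le> c p (load S f' p)" if "f' k {q} > 0"
    using wardrop_eqD[OF eq' k q(1) that p(1)] by (simp add: cost)
  moreover have "0 \<le> f' k {q}"
    using ff' k q(1) by (simp add: feasible_flow_def)
  ultimately show ?thesis
    by force
qed

text \<open>If the loads dropped on the set \<open>D\<close> of resources, no commodity routed into \<open>D\<close> before
  could leave \<open>D\<close>, so the flow into \<open>D\<close> could not decrease.\<close>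
lemma wardrop_eq_load_mono:
  assumes strict: "\<And>r a b. r \<in> R \<Longrightarrow> 0 \<le> a \<Longrightarrow> a < b \<Longrightarrow> c r a < c r b"
    and eq: "wardrop_eq c S \<mu> f" and eq': "wardrop_eq c S \<mu>' f'"
    and le: "\<And>h. h < length S \<Longrightarrow> \<mu> h \<le> \<mu>' h" and "r \<in> R"
  shows "load S f r \<le> load S f' r"
proof (rule ccontr)
  assume contra: "\<not> ?thesis"
  have ff: "feasible_flow S \<mu> f" and ff': "feasible_flow S \<mu>' f'"
    using eq eq' by (simp_all add: wardrop_eq_def)
  define D where "D = {q \<in> R. load S f' q < load S f q}"
  have DR: "D \<subseteq> R"
    by (auto simp: D_def)
  have no_escape: "f' k s' = 0"
    if k: "k < length S" and s: "s \<in> S ! k" "s \<subseteq> D" "f k s > 0"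
      and s': "s' \<in> S ! k" "\<not> s' \<subseteq> D" for k s s'
  proof -
    obtain p q where pq: "s = {p}" "s' = {q}"
      using singleton_strategies[OF k s(1)] singleton_strategies[OF k s'(1)] by blast
    have "q \<in> R"
      using strategy_subset[OF k s'(1)] pq by auto
    show ?thesis
      unfolding pq(2)
      by (rule wardrop_eq_no_escape[OF strict eq eq' k]) (use s s' pq \<open>q \<in> R\<close> in \<open>auto simp: D_def\<close>)
  qed
  have commodity: "(\<Sum>s\<in>{s \<in> S ! k. s \<subseteq> D}. f k s) \<le> (\<Sum>s\<in>{s \<in> S ! k. s \<subseteq> D}. f' k s)"
    if k: "k < length S" for k
  proof (cases "\<exists>s\<in>S ! k. s \<subseteq> D \<and> f k s > 0")
    case True
    then obtain s where s: "s \<in> S ! k" "s \<subseteq> D" "f k s > 0"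
      by blast
    have "(\<Sum>s\<in>{s \<in> S ! k. s \<subseteq> D}. f k s) \<le> (\<Sum>s\<in>S ! k. f k s)"
      using ff k by (intro sum_mono2 finite_family) (auto simp: feasible_flow_def)
    also have "\<dots> \<le> (\<Sum>s\<in>S ! k. f' k s)"
      using ff ff' le[OF k] k by (simp add: feasible_flow_def)
    also have "\<dots> = (\<Sum>s\<in>{s \<in> S ! k. s \<subseteq> D}. f' k s)"
      using no_escape[OF k s] by (intro sum.mono_neutral_right finite_family k) auto
    finally show ?thesis .
  next
    case False
    then have "(\<Sum>s\<in>{s \<in> S ! k. s \<subseteq> D}. f k s) \<le> 0"
      by (intro sum_nonpos) auto
    also have "0 \<le> (\<Sum>s\<in>{s \<in> S ! k. s \<subseteq> D}. f' k s)"
      using ff' k by (intro sum_nonneg) (simp add: feasible_flow_def)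
    finally show ?thesis .
  qed
  have "(\<Sum>q\<in>D. load S f q) \<le> (\<Sum>q\<in>D. load S f' q)"
    unfolding sum_load_eq_sum_flows_inside[OF DR] by (rule sum_mono) (simp add: commodity)
  moreover have "(\<Sum>q\<in>D. load S f' q) < (\<Sum>q\<in>D. load S f q)"
    using contra \<open>r \<in> R\<close> finite_resources
    by (intro sum_strict_mono_ex1) (auto simp: D_def)
  ultimately show False
    by simp
qed

lemma has_MES:
  assumes adm: "admissible_costs R c"
  shows "has_MES R c S"
proof -
  define e where "e n = inverse (real (Suc n))" for n
  define c' where "c' n = (\<lambda>r t. c r t + e n * t)" for n
  have e_pos: "0 < e n" for n
    by (simp add: e_def)
  have adm': "admissible_costs R (c' n)" for n
    unfolding c'_def by (rule admissible_costs_perturbed[OF adm less_imp_le[OF e_pos]])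
  have strict: "c' n r a < c' n r b" if "r \<in> R" "0 \<le> a" "a < b" for n r a b
  proof -
    have "c r a \<le> c r b"
      using adm that by (auto simp: admissible_costs_def intro: mono_onD)
    moreover have "e n * a < e n * b"
      using that e_pos by simp
    ultimately show ?thesis
      by (simp add: c'_def)
  qed
  define F where "F n \<mu> = (SOME f. wardrop_eq (c' n) S \<mu> f)" for n \<mu>
  have eq: "wardrop_eq (c' n) S \<mu> (F n \<mu>)" if "demand S \<mu>" for n \<mu>
    unfolding F_def using wardrop_eq_exists[OF adm' that] by (rule someI_ex)
  obtain G f where G: "G \<noteq> bot" "G \<le> sequentially"
    and lim: "\<forall>\<mu>\<in>{\<mu>. demand S \<mu>}. \<forall>h<length S. \<forall>s\<in>S ! h. ((\<lambda>n. F n \<mu> h s) \<longlongrightarrow> f \<mu> h s) G"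
    using feasible_flows_have_common_limits[of "{\<mu>. demand S \<mu>}" F] eq
    by (auto simp: wardrop_eq_def)
  have e: "(e \<longlongrightarrow> 0) G"
    unfolding e_def by (rule tendsto_mono[OF G(2) LIMSEQ_inverse_real_of_nat])
  show ?thesis
    unfolding has_MES_def
  proof (intro exI[of _ "\<lambda>\<mu>. load S (f \<mu>)"] conjI allI impI)
    fix \<mu> assume "demand S \<mu>"
    then have "wardrop_eq c S \<mu> (f \<mu>)"
      using eq[of \<mu>] lim
      by (intro wardrop_eq_limit[OF adm G(1) e, of \<mu> "\<lambda>n. F n \<mu>"]) (auto simp: c'_def)
    then show "eq_load_vector R c S \<mu> (load S (f \<mu>))"
      by (auto simp: eq_load_vector_def)
  next
    fix \<mu> h t r assume "demand S \<mu> \<and> h < length S \<and> \<mu> h \<le> t \<and> r \<in> R"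
    then have dem: "demand S \<mu>" "demand S (\<mu>(h := t))" and "r \<in> R" "\<mu> h \<le> t"
      by (auto simp: demand_def intro: order_trans)
    have "load S (F n \<mu>) r \<le> load S (F n (\<mu>(h := t))) r" for n
      using \<open>\<mu> h \<le> t\<close> \<open>r \<in> R\<close>
      by (intro wardrop_eq_load_mono[OF strict eq[OF dem(1)] eq[OF dem(2)]]) auto
    moreover have load_lim: "((\<lambda>n. load S (F n \<mu>') r) \<longlongrightarrow> load S (f \<mu>') r) G"
      if "demand S \<mu>'" for \<mu>'
      using lim that by (intro tendsto_load) auto
    ultimately show "load S (f \<mu>) r \<le> load S (f (\<mu>(h := t))) r"
      using tendsto_le[OF G(1) load_lim[OF dem(2)] load_lim[OF dem(1)]] by simp
  qed
qed

end

section \<open>Unions\<close>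

lemma sum_lessThan_add_split:
  "(\<Sum>h<m + n. g h) = (\<Sum>h<m. g h) + (\<Sum>h<n. g (h + m))" for g :: "nat \<Rightarrow> 'a::comm_monoid_add"
  by (induction n) (simp_all add: ac_simps)

lemma load_append: "load (S1 @ S2) f r = load S1 f r + load S2 (\<lambda>h. f (h + length S1)) r"
  unfolding load_def by (simp add: sum_lessThan_add_split nth_append)

lemma congestion_game_append:
  assumes "congestion_game R1 S1" "congestion_game R2 S2"
  shows "congestion_game (R1 \<union> R2) (S1 @ S2)"
proof -
  have "h - length S1 < length S2" if "\<not> h < length S1" "h < length (S1 @ S2)" for h
    using that by simp
  with assms show ?thesis
    unfolding congestion_game_def by (simp add: nth_append) blast
qed

lemma load_append_flows:
  "load (S1 @ S2) (\<lambda>h. if h < length S1 then f1 h else f2 (h - length S1)) r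
     = load S1 f1 r + load S2 f2 r"
proof -
  have "load S1 (\<lambda>h. if h < length S1 then f1 h else f2 (h - length S1)) r = load S1 f1 r"
    unfolding load_def by (intro sum.cong) auto
  then show ?thesis
    unfolding load_append by (simp add: load_def)
qed

lemma wardrop_eq_append:
  assumes G1: "congestion_game R1 S1" and G2: "congestion_game R2 S2" and disj: "R1 \<inter> R2 = {}"
    and eq1: "wardrop_eq c S1 \<mu> f1" and eq2: "wardrop_eq c S2 (\<lambda>h. \<mu> (h + length S1)) f2"
  defines "f \<equiv> \<lambda>h. if h < length S1 then f1 h else f2 (h - length S1)"
  shows "wardrop_eq c (S1 @ S2) \<mu> f"
    and "r \<in> R1 \<Longrightarrow> load (S1 @ S2) f r = load S1 f1 r"
    and "r \<in> R2 \<Longrightarrow> load (S1 @ S2) f r = load S2 f2 r"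
proof -
  interpret G1: congestion_game R1 S1 by (rule G1)
  interpret G2: congestion_game R2 S2 by (rule G2)
  interpret G: congestion_game "R1 \<union> R2" "S1 @ S2"
    using congestion_game_append[OF G1 G2] .
  let ?n = "length S1"
  have load: "load (S1 @ S2) f r = load S1 f1 r + load S2 f2 r" for r
    unfolding f_def by (rule load_append_flows)
  show load1: "load (S1 @ S2) f r = load S1 f1 r" if "r \<in> R1" for r
    using that disj G2.load_outside load by auto
  show load2: "load (S1 @ S2) f r = load S2 f2 r" if "r \<in> R2" for r
    using that disj G1.load_outside load by auto
  have ff: "feasible_flow S1 \<mu> f1" "feasible_flow S2 (\<lambda>h. \<mu> (h + ?n)) f2"
    using eq1 eq2 by (simp_all add: wardrop_eq_def)
  show "wardrop_eq c (S1 @ S2) \<mu> f"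
  proof (rule G.wardrop_eqI)
    show "feasible_flow (S1 @ S2) \<mu> f"
      unfolding feasible_flow_def
    proof (intro allI impI)
      fix h assume "h < length (S1 @ S2)"
      then consider "h < ?n" | "h \<ge> ?n" "h - ?n < length S2"
        by fastforce
      then show "(\<forall>s\<in>(S1 @ S2) ! h. 0 \<le> f h s) \<and> (\<Sum>s\<in>(S1 @ S2) ! h. f h s) = \<mu> h"
        using ff by cases (auto simp: feasible_flow_def f_def nth_append)
    qed
  next
    fix h s s'
    assume h: "h < length (S1 @ S2)" and s: "s \<in> (S1 @ S2) ! h" and pos: "f h s > 0"
      and s': "s' \<in> (S1 @ S2) ! h"
    consider "h < ?n" | "h \<ge> ?n" "h - ?n < length S2"
      using h by fastforce
    then show "strat_cost c (S1 @ S2) f s \<le> strat_cost c (S1 @ S2) f s'"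
    proof cases
      case 1
      have "strat_cost c (S1 @ S2) f u = strat_cost c S1 f1 u" if "u \<in> S1 ! h" for u
        using G1.strategy_subset[OF 1 that] by (intro strat_cost_cong load1) auto
      with wardrop_eqD[OF eq1 1] 1 s s' pos show ?thesis
        by (simp add: f_def nth_append)
    next
      case 2
      have "strat_cost c (S1 @ S2) f u = strat_cost c S2 f2 u" if "u \<in> S2 ! (h - ?n)" for u
        using G2.strategy_subset[OF 2(2) that] by (intro strat_cost_cong load2) auto
      with wardrop_eqD[OF eq2 2(2)] 2 s s' pos show ?thesis
        by (simp add: f_def nth_append)
    qed
  qed
qed

lemma eq_load_vector_append:
  assumes G1: "congestion_game R1 S1" and G2: "congestion_game R2 S2" and disj: "R1 \<inter> R2 = {}"
    and "eq_load_vector R1 c S1 \<mu> x1" and "eq_load_vector R2 c S2 (\<lambda>h. \<mu> (h + length S1)) x2"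
  shows "eq_load_vector (R1 \<union> R2) c (S1 @ S2) \<mu> (\<lambda>r. if r \<in> R1 then x1 r else x2 r)"
proof -
  obtain f1 f2 where f1: "wardrop_eq c S1 \<mu> f1" "\<forall>r\<in>R1. x1 r = load S1 f1 r"
    and f2: "wardrop_eq c S2 (\<lambda>h. \<mu> (h + length S1)) f2" "\<forall>r\<in>R2. x2 r = load S2 f2 r"
    using assms(4,5) unfolding eq_load_vector_def by blast
  show ?thesis
    unfolding eq_load_vector_def
    using wardrop_eq_append[OF G1 G2 disj f1(1) f2(1)] f1(2) f2(2) disj
    by (intro exI[of _ "\<lambda>h. if h < length S1 then f1 h else f2 (h - length S1)"]) auto
qed

text \<open>Raising one demand of a union or product game can also change demands of a factor that
  belong to no commodity of it; a selection may be assumed to ignore those.\<close>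
lemma has_MES_local_selection:
  assumes "has_MES R c S"
  shows "\<exists>X. (\<forall>\<mu>. demand S \<mu> \<longrightarrow> eq_load_vector R c S \<mu> (X \<mu>)) \<and>
             (\<forall>\<mu> h t r. demand S \<mu> \<and> h < length S \<and> \<mu> h \<le> t \<and> r \<in> R \<longrightarrow> X \<mu> r \<le> X (\<mu>(h := t)) r) \<and>
             (\<forall>\<mu> \<mu>'. (\<forall>h<length S. \<mu> h = \<mu>' h) \<longrightarrow> X \<mu> = X \<mu>')"
proof -
  obtain X where eq: "\<And>\<mu>. demand S \<mu> \<Longrightarrow> eq_load_vector R c S \<mu> (X \<mu>)"
    and mono: "\<And>\<mu> h t r. demand S \<mu> \<Longrightarrow> h < length S \<Longrightarrow> \<mu> h \<le> t \<Longrightarrow> r \<in> R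
                 \<Longrightarrow> X \<mu> r \<le> X (\<mu>(h := t)) r"
    using assms unfolding has_MES_def by blast
  define trunc where "trunc \<mu> k = (if k < length S then \<mu> k else 0)" for \<mu> :: "nat \<Rightarrow> real" and k
  have "eq_load_vector R c S \<mu> (X (trunc \<mu>))" if "demand S \<mu>" for \<mu>
  proof -
    have "eq_load_vector R c S (trunc \<mu>) (X (trunc \<mu>))"
      using that by (intro eq) (simp add: demand_def trunc_def)
    then show ?thesis
      by (simp add: eq_load_vector_cong[of S \<mu> "trunc \<mu>"] trunc_def)
  qed
  moreover have "X (trunc \<mu>) r \<le> X (trunc (\<mu>(h := t))) r"
    if "demand S \<mu>" "h < length S" "\<mu> h \<le> t" "r \<in> R" for \<mu> h t r
  proof -
    have "trunc (\<mu>(h := t)) = (trunc \<mu>)(h := t)"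
      using \<open>h < length S\<close> by (auto simp: trunc_def)
    with that show ?thesis
      by (simp add: mono demand_def trunc_def)
  qed
  moreover have "X (trunc \<mu>) = X (trunc \<mu>')" if "\<forall>h<length S. \<mu> h = \<mu>' h" for \<mu> \<mu>'
  proof -
    have "trunc \<mu> = trunc \<mu>'"
      using that by (simp add: trunc_def fun_eq_iff)
    then show ?thesis
      by simp
  qed
  ultimately show ?thesis
    by (intro exI[of _ "\<lambda>\<mu>. X (trunc \<mu>)"]) auto
qed

lemma has_MES_append:
  assumes G1: "congestion_game R1 S1" and G2: "congestion_game R2 S2" and disj: "R1 \<inter> R2 = {}"
    and M1: "has_MES R1 c S1" and M2: "has_MES R2 c S2"
  shows "has_MES (R1 \<union> R2) c (S1 @ S2)"
proof -
  let ?n = "length S1"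
  obtain X1 where eq1: "\<And>\<mu>. demand S1 \<mu> \<Longrightarrow> eq_load_vector R1 c S1 \<mu> (X1 \<mu>)"
    and mono1: "\<And>\<mu> h t r. demand S1 \<mu> \<Longrightarrow> h < length S1 \<Longrightarrow> \<mu> h \<le> t \<Longrightarrow> r \<in> R1
                  \<Longrightarrow> X1 \<mu> r \<le> X1 (\<mu>(h := t)) r"
    and local1: "\<And>\<mu> \<mu>'. \<forall>h<length S1. \<mu> h = \<mu>' h \<Longrightarrow> X1 \<mu> = X1 \<mu>'"
    using has_MES_local_selection[OF M1] by blast
  obtain X2 where eq2: "\<And>\<mu>. demand S2 \<mu> \<Longrightarrow> eq_load_vector R2 c S2 \<mu> (X2 \<mu>)"
    and mono2: "\<And>\<mu> h t r. demand S2 \<mu> \<Longrightarrow> h < length S2 \<Longrightarrow> \<mu> h \<le> t \<Longrightarrow> r \<in> R2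
                  \<Longrightarrow> X2 \<mu> r \<le> X2 (\<mu>(h := t)) r"
    using M2 unfolding has_MES_def by blast
  define shift where "shift \<mu> k = \<mu> (k + ?n)" for \<mu> :: "nat \<Rightarrow> real" and k
  have dem: "demand S1 \<mu>" "demand S2 (shift \<mu>)" if "demand (S1 @ S2) \<mu>" for \<mu>
    using that by (auto simp: demand_def shift_def)
  show ?thesis
    unfolding has_MES_def
  proof (intro exI[of _ "\<lambda>\<mu> r. if r \<in> R1 then X1 \<mu> r else X2 (shift \<mu>) r"] conjI allI impI)
    fix \<mu> assume "demand (S1 @ S2) \<mu>"
    then show "eq_load_vector (R1 \<union> R2) c (S1 @ S2) \<mu> (\<lambda>r. if r \<in> R1 then X1 \<mu> r else X2 (shift \<mu>) r)"
      using eq1 eq2 dem unfolding shift_def by (intro eq_load_vector_append[OF G1 G2 disj]) auto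
  next
    fix \<mu> h t r assume "demand (S1 @ S2) \<mu> \<and> h < length (S1 @ S2) \<and> \<mu> h \<le> t \<and> r \<in> R1 \<union> R2"
    then have d: "demand (S1 @ S2) \<mu>" and h: "h < length (S1 @ S2)" and t: "\<mu> h \<le> t"
      and r: "r \<in> R1 \<union> R2"
      by auto
    show "(if r \<in> R1 then X1 \<mu> r else X2 (shift \<mu>) r)
          \<le> (if r \<in> R1 then X1 (\<mu>(h := t)) r else X2 (shift (\<mu>(h := t))) r)"
    proof (cases "h < ?n")
      case True
      then have "shift (\<mu>(h := t)) = shift \<mu>"
        by (auto simp: shift_def)
      with True t dem(1)[OF d] show ?thesis
        by (auto intro: mono1)
    next
      case False
      then have "X1 (\<mu>(h := t)) = X1 \<mu>"
        by (intro local1) simp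
      moreover have "shift (\<mu>(h := t)) = (shift \<mu>)(h - ?n := t)"
        using False by (auto simp: shift_def fun_eq_iff)
      ultimately show ?thesis
        using False h t r dem(2)[OF d] by (auto simp: shift_def intro: mono2)
    qed
  qed
qed

section \<open>Products\<close>

definition join_fam :: "'r set set \<Rightarrow> 'r set set \<Rightarrow> 'r set set" where
  "join_fam A B = {s1 \<union> s2 | s1 s2. s1 \<in> A \<and> s2 \<in> B}"

lemma prod_fams_Cons: "prod_fams (A # S1) S2 = map (join_fam A) S2 @ prod_fams S1 S2"
  by (simp add: prod_fams_def join_fam_def)

lemma length_prod_fams: "length (prod_fams S1 S2) = length S1 * length S2"
  by (induction S1) (simp_all add: prod_fams_Cons, simp add: prod_fams_def)

lemma nth_prod_fams:
  assumes "i < length S1" "j < length S2"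
  shows "prod_fams S1 S2 ! (i * length S2 + j) = join_fam (S1 ! i) (S2 ! j)"
  using assms
proof (induction S1 arbitrary: i)
  case (Cons A S1)
  then show ?case
    by (cases i) (simp_all add: prod_fams_Cons nth_append)
qed simp

lemma mult_add_index_cases:
  fixes m n1 n2 :: nat
  assumes "m < n1 * n2"
  obtains i j where "i < n1" "j < n2" "m = i * n2 + j"
proof
  have "n2 > 0"
    using assms by (cases n2) auto
  then show "m mod n2 < n2"
    by simp
  show "m div n2 < n1"
    using assms by (simp add: less_mult_imp_div_less)
  show "m = m div n2 * n2 + m mod n2"
    by simp
qed

lemma mult_add_index_less:
  fixes i j n1 n2 :: nat
  assumes "i < n1" "j < n2"
  shows "i * n2 + j < n1 * n2"
proof -
  have "i * n2 + j < Suc i * n2"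
    using assms(2) by simp
  also have "\<dots> \<le> n1 * n2"
    using assms(1) by (intro mult_right_mono) auto
  finally show ?thesis .
qed

lemma mult_add_index_eq_iff:
  fixes i j i' j' n :: nat
  assumes "j < n" "j' < n"
  shows "i' * n + j' = i * n + j \<longleftrightarrow> i' = i \<and> j' = j"
proof
  assume "i' * n + j' = i * n + j"
  then have "(i' * n + j') div n = (i * n + j) div n" "(i' * n + j') mod n = (i * n + j) mod n"
    by simp_all
  with assms show "i' = i \<and> j' = j"
    by simp
qed simp

lemma sum_mult_add_index: "(\<Sum>m<n1 * n2. g m) = (\<Sum>i<n1. \<Sum>j<n2. g (i * n2 + j))"
  for g :: "nat \<Rightarrow> 'a::comm_monoid_add"
proof (induction n1)
  case (Suc n1)
  have "Suc n1 * n2 = n1 * n2 + n2"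
    by simp
  then show ?case
    using Suc.IH by (simp only: sum_lessThan_add_split sum.lessThan_Suc) (simp add: add.commute)
qed simp

lemma sum_join_fam:
  assumes "finite A" "finite B" "\<forall>s\<in>A. s \<subseteq> R1" "\<forall>s\<in>B. s \<subseteq> R2" "R1 \<inter> R2 = {}"
  shows "(\<Sum>s\<in>join_fam A B. \<phi> s) = (\<Sum>s1\<in>A. \<Sum>s2\<in>B. \<phi> (s1 \<union> s2))"
proof -
  have img: "join_fam A B = (\<lambda>(s1, s2). s1 \<union> s2) ` (A \<times> B)"
    by (auto simp: join_fam_def)
  text \<open>Since \<open>R1\<close> and \<open>R2\<close> are disjoint, \<open>s1\<close> and \<open>s2\<close> are recovered from \<open>s1 \<union> s2\<close>.\<close>
  have "inj_on (\<lambda>(s1, s2). s1 \<union> s2) (A \<times> B)"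
  proof (rule inj_onI, clarify)
    fix s1 s2 t1 t2 assume "s1 \<in> A" "s2 \<in> B" "t1 \<in> A" "t2 \<in> B" "s1 \<union> s2 = t1 \<union> t2"
    with assms have "s1 = (s1 \<union> s2) \<inter> R1" "t1 = (t1 \<union> t2) \<inter> R1"
      "s2 = (s1 \<union> s2) \<inter> R2" "t2 = (t1 \<union> t2) \<inter> R2"
      by blast+
    with \<open>s1 \<union> s2 = t1 \<union> t2\<close> show "s1 = t1 \<and> s2 = t2"
      by metis
  qed
  then show ?thesis
    by (simp add: img sum.reindex sum.cartesian_product case_prod_beta')
qed

lemma divide_self_cancel_le:
  fixes x y :: real
  assumes "0 \<le> x" "x \<le> y"
  shows "x * (y / y) = x" "x / y * y = x"
  using assms by (cases "y = 0"; simp)+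

locale game_product =
  G1: congestion_game R1 S1 + G2: congestion_game R2 S2
  for R1 :: "'r set" and S1 and R2 :: "'r set" and S2 +
  assumes disjoint: "R1 \<inter> R2 = {}"
begin

text \<open>Commodity \<open>i \<otimes> j\<close> is indexed by \<open>i * length S2 + j\<close>, the position of its strategy family
  in \<open>prod_fams\<close>; its demand contributes to row \<open>i\<close> of the first and column \<open>j\<close> of the
  second factor.\<close>
definition row_demand :: "(nat \<Rightarrow> real) \<Rightarrow> nat \<Rightarrow> real" where
  "row_demand \<mu> i = (\<Sum>j<length S2. \<mu> (i * length S2 + j))"

definition col_demand :: "(nat \<Rightarrow> real) \<Rightarrow> nat \<Rightarrow> real" where
  "col_demand \<mu> j = (\<Sum>i<length S1. \<mu> (i * length S2 + j))"

text \<open>Commodity \<open>i \<otimes> j\<close> splits its demand over \<open>s1 \<union> s2\<close> in the proportions in which the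
  factor flows \<open>g\<close> and \<open>k\<close> split row \<open>i\<close> and column \<open>j\<close>.  A zero marginal yields the junk
  quotient \<open>0\<close>, harmlessly: then \<open>\<mu> m = 0\<close>.\<close>
definition product_flow ::
    "(nat \<Rightarrow> 'r set \<Rightarrow> real) \<Rightarrow> (nat \<Rightarrow> 'r set \<Rightarrow> real) \<Rightarrow> (nat \<Rightarrow> real) \<Rightarrow> nat \<Rightarrow> 'r set \<Rightarrow> real" where
  "product_flow g k \<mu> m s =
     (let i = m div length S2; j = m mod length S2
      in \<mu> m * (g i (s \<inter> R1) / row_demand \<mu> i) * (k j (s \<inter> R2) / col_demand \<mu> j))"

lemma prod_fams_index_cases:
  assumes "m < length (prod_fams S1 S2)"
  obtains i j where "i < length S1" "j < length S2" "m = i * length S2 + j"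
    and "prod_fams S1 S2 ! m = join_fam (S1 ! i) (S2 ! j)"
proof -
  obtain i j where "i < length S1" "j < length S2" "m = i * length S2 + j"
    using assms unfolding length_prod_fams by (rule mult_add_index_cases)
  with that show ?thesis
    by (simp add: nth_prod_fams)
qed

lemma product_game: "congestion_game (R1 \<union> R2) (prod_fams S1 S2)"
proof
  show "finite (R1 \<union> R2)"
    using G1.finite_resources G2.finite_resources by simp
next
  fix m assume "m < length (prod_fams S1 S2)"
  then obtain i j where ij: "i < length S1" "j < length S2"
    and "prod_fams S1 S2 ! m = join_fam (S1 ! i) (S2 ! j)"
    by (rule prod_fams_index_cases)
  then show "prod_fams S1 S2 ! m \<noteq> {}"
    using G1.family_nonempty[OF ij(1)] G2.family_nonempty[OF ij(2)]
    by (auto simp: join_fam_def)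
next
  fix m s assume "m < length (prod_fams S1 S2)" "s \<in> prod_fams S1 S2 ! m"
  then obtain i j where ij: "i < length S1" "j < length S2"
    and "s \<in> join_fam (S1 ! i) (S2 ! j)"
    by (metis prod_fams_index_cases)
  then show "s \<subseteq> R1 \<union> R2"
    using G1.strategy_subset[OF ij(1)] G2.strategy_subset[OF ij(2)]
    by (auto simp: join_fam_def)
qed

lemma product_flow_join:
  assumes "i < length S1" "j < length S2" "s1 \<in> S1 ! i" "s2 \<in> S2 ! j"
  shows "product_flow g k \<mu> (i * length S2 + j) (s1 \<union> s2)
           = \<mu> (i * length S2 + j) * (g i s1 / row_demand \<mu> i) * (k j s2 / col_demand \<mu> j)"
proof -
  have "(s1 \<union> s2) \<inter> R1 = s1" "(s1 \<union> s2) \<inter> R2 = s2"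
    using G1.strategy_subset[OF assms(1,3)] G2.strategy_subset[OF assms(2,4)] disjoint by auto
  moreover have "0 < length S2"
    using assms(2) by linarith
  then have "(i * length S2 + j) div length S2 = i" "(i * length S2 + j) mod length S2 = j"
    using assms(2) by simp_all
  ultimately show ?thesis
    by (simp add: product_flow_def Let_def)
qed

lemma sum_join_fam_families:
  assumes "i < length S1" "j < length S2"
  shows "(\<Sum>s\<in>prod_fams S1 S2 ! (i * length S2 + j). \<phi> s) = (\<Sum>s1\<in>S1 ! i. \<Sum>s2\<in>S2 ! j. \<phi> (s1 \<union> s2))"
  unfolding nth_prod_fams[OF assms]
  by (rule sum_join_fam)
     (use assms G1.strategy_subset G2.strategy_subset disjoint in \<open>auto simp: G1.finite_family G2.finite_family\<close>)

lemma demand_product_cell: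
  assumes "demand (prod_fams S1 S2) \<mu>" "i < length S1" "j < length S2"
  shows "0 \<le> \<mu> (i * length S2 + j)" "\<mu> (i * length S2 + j) \<le> row_demand \<mu> i"
    "\<mu> (i * length S2 + j) \<le> col_demand \<mu> j"
proof -
  have nonneg: "0 \<le> \<mu> (i' * length S2 + j')" if "i' < length S1" "j' < length S2" for i' j'
    using assms(1) mult_add_index_less[OF that] by (simp add: demand_def length_prod_fams)
  show "0 \<le> \<mu> (i * length S2 + j)"
    using nonneg assms(2,3) .
  show "\<mu> (i * length S2 + j) \<le> row_demand \<mu> i"
    unfolding row_demand_def using assms nonneg
    by (intro member_le_sum[where f = "\<lambda>j. \<mu> (i * length S2 + j)"]) auto
  show "\<mu> (i * length S2 + j) \<le> col_demand \<mu> j"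
    unfolding col_demand_def using assms nonneg
    by (intro member_le_sum[where f = "\<lambda>i. \<mu> (i * length S2 + j)"]) auto
qed

lemma demand_factors:
  assumes "demand (prod_fams S1 S2) \<mu>"
  shows "demand S1 (row_demand \<mu>)" "demand S2 (col_demand \<mu>)"
  using demand_product_cell[OF assms]
  by (auto simp: demand_def row_demand_def col_demand_def intro: sum_nonneg)

lemma feasible_product_flow:
  assumes dem: "demand (prod_fams S1 S2) \<mu>"
    and g: "feasible_flow S1 (row_demand \<mu>) g" and k: "feasible_flow S2 (col_demand \<mu>) k"
  shows "feasible_flow (prod_fams S1 S2) \<mu> (product_flow g k \<mu>)"
  unfolding feasible_flow_def
proof (intro allI impI conjI ballI)
  fix m assume "m < length (prod_fams S1 S2)"
  then obtain i j where ij: "i < length S1" "j < length S2" and m: "m = i * length S2 + j"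
    and fam: "prod_fams S1 S2 ! m = join_fam (S1 ! i) (S2 ! j)"
    by (rule prod_fams_index_cases)
  note cell = demand_product_cell[OF dem ij]
  have gk: "\<forall>s\<in>S1 ! i. 0 \<le> g i s" "(\<Sum>s\<in>S1 ! i. g i s) = row_demand \<mu> i"
    "\<forall>s\<in>S2 ! j. 0 \<le> k j s" "(\<Sum>s\<in>S2 ! j. k j s) = col_demand \<mu> j"
    using g k ij by (simp_all add: feasible_flow_def)
  {
    fix s assume "s \<in> prod_fams S1 S2 ! m"
    then obtain s1 s2 where "s = s1 \<union> s2" "s1 \<in> S1 ! i" "s2 \<in> S2 ! j"
      by (auto simp: fam join_fam_def)
    then show "0 \<le> product_flow g k \<mu> m s"
      using gk cell by (simp add: m product_flow_join[OF ij])
  }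
  have "(\<Sum>s\<in>prod_fams S1 S2 ! m. product_flow g k \<mu> m s)
      = (\<Sum>s1\<in>S1 ! i. \<Sum>s2\<in>S2 ! j. \<mu> m * (g i s1 / row_demand \<mu> i) * (k j s2 / col_demand \<mu> j))"
    unfolding m sum_join_fam_families[OF ij] by (simp add: product_flow_join[OF ij])
  also have "\<dots> = \<mu> m * (row_demand \<mu> i / row_demand \<mu> i) * (col_demand \<mu> j / col_demand \<mu> j)"
    by (simp add: sum_product[symmetric] sum_distrib_left[symmetric] sum_divide_distrib[symmetric] gk)
  also have "\<dots> = \<mu> m"
    using cell by (simp add: m divide_self_cancel_le(1))
  finally show "(\<Sum>s\<in>prod_fams S1 S2 ! m. product_flow g k \<mu> m s) = \<mu> m" .
qed

lemma product_flow_commodity_load: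
  assumes dem: "demand (prod_fams S1 S2) \<mu>"
    and g: "feasible_flow S1 (row_demand \<mu>) g" and k: "feasible_flow S2 (col_demand \<mu>) k"
    and ij: "i < length S1" "j < length S2"
  defines "m \<equiv> i * length S2 + j"
  shows "(\<Sum>s\<in>prod_fams S1 S2 ! m. if r \<in> s then product_flow g k \<mu> m s else 0)
      = (\<Sum>s1\<in>S1 ! i. if r \<in> s1 then g i s1 else 0) / row_demand \<mu> i * \<mu> m
        + (\<Sum>s2\<in>S2 ! j. if r \<in> s2 then k j s2 else 0) / col_demand \<mu> j * \<mu> m"
proof -
  let ?\<nu> = "row_demand \<mu> i" and ?\<rho> = "col_demand \<mu> j"
  let ?a = "\<Sum>s1\<in>S1 ! i. if r \<in> s1 then g i s1 else 0"
  let ?b = "\<Sum>s2\<in>S2 ! j. if r \<in> s2 then k j s2 else 0"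
  have gk: "(\<Sum>s\<in>S1 ! i. g i s) = ?\<nu>" "(\<Sum>s\<in>S2 ! j. k j s) = ?\<rho>"
    using g k ij by (simp_all add: feasible_flow_def)
  text \<open>\<open>r\<close> lies in at most one of \<open>s1 \<subseteq> R1\<close> and \<open>s2 \<subseteq> R2\<close>.\<close>
  have split: "(if r \<in> s1 \<union> s2 then \<mu> m * (g i s1 / ?\<nu>) * (k j s2 / ?\<rho>) else 0)
      = (if r \<in> s1 then g i s1 else 0) * (\<mu> m / ?\<nu>) * (k j s2 / ?\<rho>)
        + (g i s1 / ?\<nu>) * ((if r \<in> s2 then k j s2 else 0) * (\<mu> m / ?\<rho>))"
    if "s1 \<in> S1 ! i" "s2 \<in> S2 ! j" for s1 s2
    using G1.strategy_subset[OF ij(1) that(1)] G2.strategy_subset[OF ij(2) that(2)] disjoint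
    by auto
  have "(\<Sum>s\<in>prod_fams S1 S2 ! m. if r \<in> s then product_flow g k \<mu> m s else 0)
      = (\<Sum>s1\<in>S1 ! i. \<Sum>s2\<in>S2 ! j. if r \<in> s1 \<union> s2 then \<mu> m * (g i s1 / ?\<nu>) * (k j s2 / ?\<rho>) else 0)"
    unfolding m_def sum_join_fam_families[OF ij]
    by (intro sum.cong refl) (simp add: product_flow_join[OF ij])
  also have "\<dots> = (\<Sum>s1\<in>S1 ! i. \<Sum>s2\<in>S2 ! j. (if r \<in> s1 then g i s1 else 0) * (\<mu> m / ?\<nu>) * (k j s2 / ?\<rho>))
      + (\<Sum>s1\<in>S1 ! i. \<Sum>s2\<in>S2 ! j. (g i s1 / ?\<nu>) * ((if r \<in> s2 then k j s2 else 0) * (\<mu> m / ?\<rho>)))"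
    by (simp only: split sum.distrib cong: sum.cong)
  also have "\<dots> = ?a / ?\<nu> * (\<mu> m * (?\<rho> / ?\<rho>)) + ?b / ?\<rho> * (\<mu> m * (?\<nu> / ?\<nu>))"
    by (simp add: sum_product[symmetric] sum_distrib_right[symmetric] sum_distrib_left[symmetric]
        sum_divide_distrib[symmetric] gk)
  also have "\<dots> = ?a / ?\<nu> * \<mu> m + ?b / ?\<rho> * \<mu> m"
    using demand_product_cell[OF dem ij] by (simp add: m_def divide_self_cancel_le(1))
  finally show ?thesis .
qed

lemma load_product_flow:
  assumes dem: "demand (prod_fams S1 S2) \<mu>"
    and g: "feasible_flow S1 (row_demand \<mu>) g" and k: "feasible_flow S2 (col_demand \<mu>) k"
  shows "load (prod_fams S1 S2) (product_flow g k \<mu>) r = load S1 g r + load S2 k r"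
proof -
  interpret P: congestion_game "R1 \<union> R2" "prod_fams S1 S2"
    by (rule product_game)
  define a where "a i = (\<Sum>s1\<in>S1 ! i. if r \<in> s1 then g i s1 else 0)" for i
  define b where "b j = (\<Sum>s2\<in>S2 ! j. if r \<in> s2 then k j s2 else 0)" for j
  let ?\<mu> = "\<lambda>i j. \<mu> (i * length S2 + j)"
  have "load (prod_fams S1 S2) (product_flow g k \<mu>) r
      = (\<Sum>i<length S1. \<Sum>j<length S2. a i / row_demand \<mu> i * ?\<mu> i j + b j / col_demand \<mu> j * ?\<mu> i j)"
    unfolding P.load_eq_sum_if length_prod_fams sum_mult_add_index
    by (simp add: product_flow_commodity_load[OF dem g k] a_def b_def)
  also have "\<dots> = (\<Sum>i<length S1. a i / row_demand \<mu> i * row_demand \<mu> i)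
                  + (\<Sum>j<length S2. b j / col_demand \<mu> j * col_demand \<mu> j)"
    by (simp add: sum.distrib row_demand_def col_demand_def sum_distrib_left
        sum.swap[of _ "{..<length S1}" "{..<length S2}"])
  also have "\<dots> = (\<Sum>i<length S1. a i) + (\<Sum>j<length S2. b j)"
    using G1.commodity_load_bounds[OF g] G2.commodity_load_bounds[OF k] divide_self_cancel_le(2)
    by (intro arg_cong2[where f = "(+)"] sum.cong) (auto simp: a_def b_def)
  also have "\<dots> = load S1 g r + load S2 k r"
    by (simp add: G1.load_eq_sum_if G2.load_eq_sum_if a_def b_def)
  finally show ?thesis .
qed

lemma wardrop_eq_product_flow:
  assumes dem: "demand (prod_fams S1 S2) \<mu>"
    and g: "wardrop_eq c S1 (row_demand \<mu>) g" and k: "wardrop_eq c S2 (col_demand \<mu>) k"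
  shows "wardrop_eq c (prod_fams S1 S2) \<mu> (product_flow g k \<mu>)"
proof -
  interpret P: congestion_game "R1 \<union> R2" "prod_fams S1 S2"
    by (rule product_game)
  have ff: "feasible_flow S1 (row_demand \<mu>) g" "feasible_flow S2 (col_demand \<mu>) k"
    using g k by (simp_all add: wardrop_eq_def)
  have cost: "strat_cost c (prod_fams S1 S2) (product_flow g k \<mu>) (s1 \<union> s2)
      = strat_cost c S1 g s1 + strat_cost c S2 k s2"
    if "i < length S1" "j < length S2" "s1 \<in> S1 ! i" "s2 \<in> S2 ! j" for i j s1 s2
  proof -
    have sub: "s1 \<subseteq> R1" "s2 \<subseteq> R2"
      using G1.strategy_subset G2.strategy_subset that by auto
    then have "strat_cost c (prod_fams S1 S2) (product_flow g k \<mu>) (s1 \<union> s2)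
        = strat_cost c (prod_fams S1 S2) (product_flow g k \<mu>) s1
          + strat_cost c (prod_fams S1 S2) (product_flow g k \<mu>) s2"
      unfolding strat_cost_def using disjoint G1.finite_strategy G2.finite_strategy that
      by (intro sum.union_disjoint) auto
    also have "\<dots> = strat_cost c S1 g s1 + strat_cost c S2 k s2"
      using sub disjoint
      by (intro arg_cong2[where f = "(+)"] strat_cost_cong)
         (auto simp: load_product_flow[OF dem ff] intro!: G1.load_outside G2.load_outside)
    finally show ?thesis .
  qed
  show ?thesis
  proof (rule P.wardrop_eqI[OF feasible_product_flow[OF dem ff]])
    fix m s s' assume m: "m < length (prod_fams S1 S2)" and s: "s \<in> prod_fams S1 S2 ! m"
      and pos: "product_flow g k \<mu> m s > 0" and s': "s' \<in> prod_fams S1 S2 ! m"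
    obtain i j where ij: "i < length S1" "j < length S2" "m = i * length S2 + j"
      and fam: "prod_fams S1 S2 ! m = join_fam (S1 ! i) (S2 ! j)"
      using m by (rule prod_fams_index_cases)
    obtain s1 s2 s1' s2' where "s = s1 \<union> s2" "s1 \<in> S1 ! i" "s2 \<in> S2 ! j"
      and "s' = s1' \<union> s2'" "s1' \<in> S1 ! i" "s2' \<in> S2 ! j"
      using s s' by (auto simp: fam join_fam_def)
    moreover have "g i s1 > 0" "k j s2 > 0"
      using pos ff ij \<open>s1 \<in> S1 ! i\<close> \<open>s2 \<in> S2 ! j\<close>
      by (auto simp: \<open>s = s1 \<union> s2\<close> product_flow_join feasible_flow_def less_le)
    ultimately show "strat_cost c (prod_fams S1 S2) (product_flow g k \<mu>) s
        \<le> strat_cost c (prod_fams S1 S2) (product_flow g k \<mu>) s'"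
      using wardrop_eqD[OF g ij(1)] wardrop_eqD[OF k ij(2)] by (simp add: cost[OF ij(1,2)] add_mono)
  qed
qed

lemma eq_load_vector_product:
  assumes dem: "demand (prod_fams S1 S2) \<mu>"
    and "eq_load_vector R1 c S1 (row_demand \<mu>) x1" "eq_load_vector R2 c S2 (col_demand \<mu>) x2"
  shows "eq_load_vector (R1 \<union> R2) c (prod_fams S1 S2) \<mu> (\<lambda>r. if r \<in> R1 then x1 r else x2 r)"
proof -
  obtain g k where g: "wardrop_eq c S1 (row_demand \<mu>) g" "\<forall>r\<in>R1. x1 r = load S1 g r"
    and k: "wardrop_eq c S2 (col_demand \<mu>) k" "\<forall>r\<in>R2. x2 r = load S2 k r"
    using assms(2,3) unfolding eq_load_vector_def by blast
  have ff: "feasible_flow S1 (row_demand \<mu>) g" "feasible_flow S2 (col_demand \<mu>) k"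
    using g k by (simp_all add: wardrop_eq_def)
  show ?thesis
    unfolding eq_load_vector_def
  proof (intro exI[of _ "product_flow g k \<mu>"] conjI ballI wardrop_eq_product_flow[OF dem g(1) k(1)])
    fix r assume "r \<in> R1 \<union> R2"
    then consider "r \<in> R1" "r \<notin> R2" | "r \<in> R2" "r \<notin> R1"
      using disjoint by blast
    then show "(if r \<in> R1 then x1 r else x2 r) = load (prod_fams S1 S2) (product_flow g k \<mu>) r"
      by cases (simp_all add: load_product_flow[OF dem ff] G1.load_outside G2.load_outside g(2) k(2))
  qed
qed

lemma row_demand_update:
  assumes "j < length S2"
  shows "row_demand (\<mu>(i * length S2 + j := t))
           = (row_demand \<mu>)(i := row_demand \<mu> i + (t - \<mu> (i * length S2 + j)))"
proof
  fix i'
  have "(\<Sum>j'<length S2. (\<mu>(i * length S2 + j := t)) (i' * length S2 + j'))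
      = (\<Sum>j'<length S2. \<mu> (i' * length S2 + j')
           + (if j' = j then if i' = i then t - \<mu> (i * length S2 + j) else 0 else 0))"
    using assms by (intro sum.cong) (auto simp: mult_add_index_eq_iff)
  then show "row_demand (\<mu>(i * length S2 + j := t)) i'
      = ((row_demand \<mu>)(i := row_demand \<mu> i + (t - \<mu> (i * length S2 + j)))) i'"
    using assms by (simp add: row_demand_def sum.distrib)
qed

lemma col_demand_update:
  assumes "i < length S1" "j < length S2" "j' < length S2"
  shows "col_demand (\<mu>(i * length S2 + j := t)) j'
           = ((col_demand \<mu>)(j := col_demand \<mu> j + (t - \<mu> (i * length S2 + j)))) j'"
proof -
  have "(\<Sum>i'<length S1. (\<mu>(i * length S2 + j := t)) (i' * length S2 + j'))
      = (\<Sum>i'<length S1. \<mu> (i' * length S2 + j')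
           + (if i' = i then if j' = j then t - \<mu> (i * length S2 + j) else 0 else 0))"
    using assms by (intro sum.cong) (auto simp: mult_add_index_eq_iff)
  then show ?thesis
    using assms by (simp add: col_demand_def sum.distrib)
qed

lemma has_MES_prod:
  assumes M1: "has_MES R1 c S1" and M2: "has_MES R2 c S2"
  shows "has_MES (R1 \<union> R2) c (prod_fams S1 S2)"
proof -
  obtain X1 where eq1: "\<And>\<mu>. demand S1 \<mu> \<Longrightarrow> eq_load_vector R1 c S1 \<mu> (X1 \<mu>)"
    and mono1: "\<And>\<mu> h t r. demand S1 \<mu> \<Longrightarrow> h < length S1 \<Longrightarrow> \<mu> h \<le> t \<Longrightarrow> r \<in> R1
                  \<Longrightarrow> X1 \<mu> r \<le> X1 (\<mu>(h := t)) r"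
    using M1 unfolding has_MES_def by blast
  obtain X2 where eq2: "\<And>\<mu>. demand S2 \<mu> \<Longrightarrow> eq_load_vector R2 c S2 \<mu> (X2 \<mu>)"
    and mono2: "\<And>\<mu> h t r. demand S2 \<mu> \<Longrightarrow> h < length S2 \<Longrightarrow> \<mu> h \<le> t \<Longrightarrow> r \<in> R2
                  \<Longrightarrow> X2 \<mu> r \<le> X2 (\<mu>(h := t)) r"
    and local2: "\<And>\<mu> \<mu>'. \<forall>h<length S2. \<mu> h = \<mu>' h \<Longrightarrow> X2 \<mu> = X2 \<mu>'"
    using has_MES_local_selection[OF M2] by blast
  show ?thesis
    unfolding has_MES_def
  proof (intro exI[of _ "\<lambda>\<mu> r. if r \<in> R1 then X1 (row_demand \<mu>) r else X2 (col_demand \<mu>) r"]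
      conjI allI impI)
    fix \<mu> assume "demand (prod_fams S1 S2) \<mu>"
    then show "eq_load_vector (R1 \<union> R2) c (prod_fams S1 S2) \<mu>
        (\<lambda>r. if r \<in> R1 then X1 (row_demand \<mu>) r else X2 (col_demand \<mu>) r)"
      using eq1 eq2 demand_factors by (intro eq_load_vector_product) auto
  next
    fix \<mu> m t r
    assume "demand (prod_fams S1 S2) \<mu> \<and> m < length (prod_fams S1 S2) \<and> \<mu> m \<le> t \<and> r \<in> R1 \<union> R2"
    then have dem: "demand (prod_fams S1 S2) \<mu>" and m: "m < length (prod_fams S1 S2)"
      and t: "\<mu> m \<le> t" and r: "r \<in> R1 \<union> R2"
      by auto
    obtain i j where ij: "i < length S1" "j < length S2" "m = i * length S2 + j"
      using m by (rule prod_fams_index_cases)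
    have "X1 (row_demand \<mu>) r \<le> X1 (row_demand (\<mu>(m := t))) r" if "r \<in> R1"
      using mono1[OF demand_factors(1)[OF dem] ij(1) _ that, of "row_demand \<mu> i + (t - \<mu> m)"] t
      by (simp add: ij(3) row_demand_update[OF ij(2)])
    moreover have "X2 (col_demand \<mu>) r \<le> X2 (col_demand (\<mu>(m := t))) r" if "r \<in> R2"
    proof -
      have "X2 (col_demand (\<mu>(m := t))) = X2 ((col_demand \<mu>)(j := col_demand \<mu> j + (t - \<mu> m)))"
        using ij by (intro local2) (simp add: col_demand_update)
      then show ?thesis
        using mono2[OF demand_factors(2)[OF dem] ij(2) _ that, of "col_demand \<mu> j + (t - \<mu> m)"] t
        by simp
    qed
    ultimately show "(if r \<in> R1 then X1 (row_demand \<mu>) r else X2 (col_demand \<mu>) r)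
        \<le> (if r \<in> R1 then X1 (row_demand (\<mu>(m := t))) r else X2 (col_demand (\<mu>(m := t))) r)"
      using r by auto
  qed
qed

end

section \<open>Product-union games\<close>

lemma congestion_game_product_union:
  assumes "product_union R S"
  shows "congestion_game R S"
  using assms
proof (induction rule: product_union.induct)
  case (singleton R S)
  then show ?case
    by unfold_locales auto
next
  case (product R1 S1 R2 S2)
  then interpret game_product R1 S1 R2 S2
    by (simp add: game_product_def game_product_axioms_def)
  show ?case
    by (rule product_game)
next
  case (union R1 S1 R2 S2)
  show ?case
    using union.IH by (rule congestion_game_append)
qed

lemma admissible_costs_subset: "admissible_costs R c \<Longrightarrow> R' \<subseteq> R \<Longrightarrow> admissible_costs R' c"
  unfolding admissible_costs_def by blast

theorem theorem5p2:
  fixes R :: "'r set" and S :: "'r strat_fam" and c :: "'r \<Rightarrow> real \<Rightarrow> real"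
  assumes "product_union R S"
    and "admissible_costs R c"
  shows "has_MES R c S"
  using assms
proof (induction rule: product_union.induct)
  case (singleton R S)
  then interpret singleton_game R S
    by unfold_locales (use nth_mem in blast)+
  show ?case
    using singleton.prems by (rule has_MES)
next
  case (product R1 S1 R2 S2)
  then interpret game_product R1 S1 R2 S2
    by (simp add: game_product_def game_product_axioms_def congestion_game_product_union)
  show ?case
    using product admissible_costs_subset by (intro has_MES_prod) auto
next
  case (union R1 S1 R2 S2)
  then show ?case
    using admissible_costs_subset congestion_game_product_union
    by (intro has_MES_append) auto
qed

end
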